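(* Let $n\ge 2$ be an integer and $0\le n_1\le n$. For $p\in(0.5,1]$, $q=1-p$ and $\rho\in[-1,1]$ define $$h(p,\rho)=\frac{pq}{(p-q)^2}\left(n+\frac{\rho\left((2n_1-n)^2-n\right)}{n-1}\right).$$ Then (i) $h(p,\rho)$ is monotonically increasing with respect to $\rho$ if $n_1/n\le \frac12-\frac{1}{2\sqrt n}$ or $n_1/n\ge \frac12+\frac{1}{2\sqrt n}$, and monotonically decreasing with respect to $\rho$ if $\frac12-\frac{1}{2\sqrt n}<n_1/n<\frac12+\frac{1}{2\sqrt n}$; (ii) $h(p,\rho)$ is monotonically decreasing with respect to $p\in(0.5,1]$.
   Context: $h(p,\rho)$ is the variance of the JRR frequency estimator; monotonicity in $\rho$ is for fixed $p$ and in $p$ for fixed $\rho$ (monotone in the non-strict sense where the coefficient of $\rho$ vanishes). *)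

theory Defs
  imports Complex_Main
begin

definition jrr_h :: "nat \<Rightarrow> nat \<Rightarrow> real \<Rightarrow> real \<Rightarrow> real" where
  "jrr_h n n1 p \<rho> =
     (let q = 1 - p in
      (p * q / (p - q)^2) *
        (real n + \<rho> * ((2 * real n1 - real n)^2 - real n) / (real n - 1)))"

end

theory Submission
  imports Defs
begin

text \<open>
  For fixed \<open>p\<close> the variance \<open>h(p, \<rho>)\<close> is affine in \<open>\<rho>\<close> with slope
  \<open>pq/(p-q)\<^sup>2 \<cdot> ((2n\<^sub>1 - n)\<^sup>2 - n)/(n - 1)\<close>. Since \<open>pq/(p-q)\<^sup>2 \<ge> 0\<close>,
  its sign is that of \<open>(2n\<^sub>1 - n)\<^sup>2 - n\<close>, which is nonnegative exactly when
  \<open>\<bar>n\<^sub>1/n - 1/2\<bar> \<ge> 1/(2\<surd>n)\<close>. For fixed \<open>\<rho>\<close>, \<open>h\<close> is \<open>pq/(p-q)\<^sup>2 = (1/(2p-1)\<^sup>2 - 1)/4\<close>,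
  which decreases on \<open>p > 1/2\<close>, times a factor that is nonnegative because
  \<open>-n \<le> (2n\<^sub>1 - n)\<^sup>2 - n \<le> n(n - 1)\<close> and \<open>\<bar>\<rho>\<bar> \<le> 1\<close>.
\<close>

lemma mono_on_affine:
  fixes a b :: "'a::linordered_ring"
  assumes "0 \<le> b"
  shows "mono_on S (\<lambda>x. a + x * b)"
  by (rule mono_onI) (simp add: assms mult_right_mono)

lemma antimono_on_affine:
  fixes a b :: "'a::linordered_ring"
  assumes "b \<le> 0"
  shows "antimono_on S (\<lambda>x. a + x * b)"
  by (rule monotone_onI) (simp add: assms mult_right_mono_neg)

lemma antimono_on_mult_right:
  fixes f :: "'a::order \<Rightarrow> 'b::ordered_semiring"
  assumes "antimono_on S f" and "0 \<le> c"
  shows "antimono_on S (\<lambda>x. f x * c)"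
  using assms by (auto intro!: monotone_onI mult_right_mono dest: monotone_onD)

definition jrr_scale :: "real \<Rightarrow> real" where
  "jrr_scale p = p * (1 - p) / (2 * p - 1)^2"

lemma jrr_h_eq_scale:
  "jrr_h n n1 p \<rho> =
     jrr_scale p * (real n + \<rho> * ((2 * real n1 - real n)^2 - real n) / (real n - 1))"
proof -
  have "p - (1 - p) = 2 * p - 1" by simp
  then show ?thesis unfolding jrr_h_def jrr_scale_def Let_def by simp
qed

lemma jrr_scale_nonneg: "p \<in> {0..1} \<Longrightarrow> 0 \<le> jrr_scale p"
  unfolding jrr_scale_def by auto

lemma jrr_scale_eq:
  assumes "p \<noteq> 1/2"
  shows "jrr_scale p = (1 / (2 * p - 1)^2 - 1) / 4"
proof -
  have "(2 * p - 1)^2 \<noteq> 0" using assms by simp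
  then have "(1 / (2 * p - 1)^2 - 1) / 4 = (1 - (2 * p - 1)^2) / (4 * (2 * p - 1)^2)"
    by (simp add: field_simps)
  also have "1 - (2 * p - 1)^2 = 4 * (p * (1 - p))" by (simp add: power2_eq_square algebra_simps)
  finally show ?thesis unfolding jrr_scale_def by simp
qed

lemma jrr_scale_antimono: "antimono_on {1/2<..} jrr_scale"
proof (rule monotone_onI)
  fix p p' :: real
  assume "p \<in> {1/2<..}" and "p \<le> p'"
  then have "1 / (2 * p' - 1)^2 \<le> 1 / (2 * p - 1)^2"
    by (intro divide_left_mono power_mono) auto
  with \<open>p \<in> {1/2<..}\<close> \<open>p \<le> p'\<close> show "jrr_scale p' \<le> jrr_scale p"
    by (simp add: jrr_scale_eq)
qed

lemma threshold_iff_square: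
  fixes x y :: real
  assumes "0 < x"
  shows "(y / x \<le> 1/2 - 1 / (2 * sqrt x) \<or> y / x \<ge> 1/2 + 1 / (2 * sqrt x))
           \<longleftrightarrow> x \<le> (2 * y - x)^2"
proof -
  have "y / x \<le> 1/2 - 1 / (2 * sqrt x) \<longleftrightarrow> 2 * y \<le> x - x / sqrt x"
    using assms by (simp add: field_simps)
  then have lower: "y / x \<le> 1/2 - 1 / (2 * sqrt x) \<longleftrightarrow> sqrt x \<le> x - 2 * y"
    using assms by (auto simp: real_div_sqrt)
  have "y / x \<ge> 1/2 + 1 / (2 * sqrt x) \<longleftrightarrow> x + x / sqrt x \<le> 2 * y"
    using assms by (simp add: field_simps)
  then have upper: "y / x \<ge> 1/2 + 1 / (2 * sqrt x) \<longleftrightarrow> sqrt x \<le> 2 * y - x"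
    using assms by (auto simp: real_div_sqrt)
  have "(y / x \<le> 1/2 - 1 / (2 * sqrt x) \<or> y / x \<ge> 1/2 + 1 / (2 * sqrt x))
          \<longleftrightarrow> sqrt x \<le> \<bar>2 * y - x\<bar>"
    unfolding lower upper by arith
  also have "\<dots> \<longleftrightarrow> sqrt x \<le> sqrt ((2 * y - x)^2)" by simp
  also have "\<dots> \<longleftrightarrow> x \<le> (2 * y - x)^2" by (rule real_sqrt_le_iff)
  finally show ?thesis .
qed

lemma jrr_factor_nonneg:
  fixes N m \<rho> :: real
  assumes "2 \<le> N" and "0 \<le> m" "m \<le> N" and "\<bar>\<rho>\<bar> \<le> 1"
  shows "0 \<le> N + \<rho> * ((2 * m - N)^2 - N) / (N - 1)"
proof -
  define X where "X = (2 * m - N)^2 - N"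
  have "(2 * m - N)^2 \<le> N^2"
    using assms by (subst abs_le_square_iff[symmetric]) auto
  then have "X \<le> N * (N - 1)" by (simp add: X_def power2_eq_square algebra_simps)
  moreover have "- (N * (N - 1)) \<le> X"
  proof -
    have "N \<le> N * (N - 1)" using assms mult_left_mono[of 1 "N - 1" N] by simp
    then show ?thesis unfolding X_def using zero_le_power2[of "2 * m - N"] by linarith
  qed
  ultimately have "\<bar>X\<bar> \<le> N * (N - 1)" by linarith
  then have "\<bar>\<rho> * X\<bar> \<le> N * (N - 1)"
    using assms mult_mono[of "\<bar>\<rho>\<bar>" 1 "\<bar>X\<bar>" "N * (N - 1)"] by (simp add: abs_mult)
  then have "- N \<le> \<rho> * X / (N - 1)"
    using assms by (simp add: field_simps abs_le_iff)
  then show ?thesis unfolding X_def by linarith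
qed

theorem theorem4:
  fixes n n1 :: nat
  assumes "n \<ge> 2" and "n1 \<le> n"
  shows "(\<forall>p\<in>{1/2<..1}.
            ((real n1 / real n \<le> 1/2 - 1 / (2 * sqrt (real n)) \<or>
              real n1 / real n \<ge> 1/2 + 1 / (2 * sqrt (real n)))
               \<longrightarrow> mono_on {-1..1} (\<lambda>\<rho>. jrr_h n n1 p \<rho>)) \<and>
            ((1/2 - 1 / (2 * sqrt (real n)) < real n1 / real n \<and>
              real n1 / real n < 1/2 + 1 / (2 * sqrt (real n)))
               \<longrightarrow> antimono_on {-1..1} (\<lambda>\<rho>. jrr_h n n1 p \<rho>)))
       \<and> (\<forall>\<rho>\<in>{-1..1}. antimono_on {1/2<..1} (\<lambda>p. jrr_h n n1 p \<rho>))"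
proof -
  define X where "X = (2 * real n1 - real n)^2 - real n"
  have n_ge: "real n \<ge> 2" using assms by simp
  have affine: "(\<lambda>\<rho>. jrr_h n n1 p \<rho>) = (\<lambda>\<rho>. jrr_scale p * real n + \<rho> * (jrr_scale p * X / (real n - 1)))"
    for p unfolding jrr_h_eq_scale X_def by (simp add: algebra_simps)
  have threshold: "(real n1 / real n \<le> 1/2 - 1 / (2 * sqrt (real n)) \<or>
              real n1 / real n \<ge> 1/2 + 1 / (2 * sqrt (real n))) \<longleftrightarrow> 0 \<le> X"
    using threshold_iff_square[of "real n" "real n1"] n_ge by (simp add: X_def)
  have in_rho: "mono_on {-1..1} (\<lambda>\<rho>. jrr_h n n1 p \<rho>)" if "0 \<le> X" "p \<in> {1/2<..1}" for p
    unfolding affine using that n_ge jrr_scale_nonneg[of p] by (intro mono_on_affine) simp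
  have anti_rho: "antimono_on {-1..1} (\<lambda>\<rho>. jrr_h n n1 p \<rho>)" if "X < 0" "p \<in> {1/2<..1}" for p
    unfolding affine using that n_ge jrr_scale_nonneg[of p]
    by (intro antimono_on_affine) (simp add: mult_nonneg_nonpos divide_nonpos_pos)
  have anti_p: "antimono_on {1/2<..1} (\<lambda>p. jrr_h n n1 p \<rho>)" if "\<rho> \<in> {-1..1}" for \<rho>
  proof -
    have "antimono_on {1/2<..1} jrr_scale"
      by (rule monotone_on_subset[OF jrr_scale_antimono]) auto
    moreover have "0 \<le> real n + \<rho> * ((2 * real n1 - real n)^2 - real n) / (real n - 1)"
      using that assms by (intro jrr_factor_nonneg) auto
    ultimately show ?thesis unfolding jrr_h_eq_scale by (rule antimono_on_mult_right)
  qed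
  have strict_iff: "(1/2 - 1 / (2 * sqrt (real n)) < real n1 / real n \<and>
              real n1 / real n < 1/2 + 1 / (2 * sqrt (real n))) \<longleftrightarrow> X < 0"
    using threshold by linarith
  show ?thesis unfolding strict_iff threshold using in_rho anti_rho anti_p by blast
qed

end
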